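(* Let $Z$ be a separable Banach space and let $g:U\to Z$ depend analytically on $\boldsymbol y\in U=[-\frac12,\frac12]^{\mathbb N}$. Suppose there exist constants $C_0>0$, $r_1\ge0$, $r_2>0$ and a sequence $\boldsymbol\rho=(\rho_j)_{j\ge1}\in\ell^p(\mathbb N)$ for some $0<p<1$ with $\rho_1\ge\rho_2\ge\cdots$, such that for all $\boldsymbol y\in U$ and $\boldsymbol\nu\in\mathscr F$, $$\|\partial^{\boldsymbol\nu}_{\boldsymbol y}g(\boldsymbol y)\|_Z\le C_0\,(|\boldsymbol\nu|+r_1)!\,(r_2\boldsymbol\rho)^{\boldsymbol\nu}.$$ Then for all $s\in\mathbb N$, $$\Big\|\int_U\big(g(\boldsymbol y)-g(\boldsymbol y_{\le s};\boldsymbol 0)\big)\,\mathrm d\boldsymbol y\Big\|_Z\le C_0\,C\,s^{-2/p+1},$$ where $C>0$ is independent of $s$ (and of $C_0$).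
   Context: $U=[-\frac12,\frac12]^{\mathbb N}$ carries the product of uniform probability measures $\mathrm d\boldsymbol y$, and integrals of $Z$-valued functions are Bochner integrals. $(\boldsymbol y_{\le s};\boldsymbol 0):=(y_1,\dots,y_s,0,0,\dots)$. $\mathscr F$ is the set of finitely supported multi-indices $\boldsymbol\nu\in\mathbb N_0^{\mathbb N}$, $|\boldsymbol\nu|=\sum_j\nu_j$, $\partial^{\boldsymbol\nu}_{\boldsymbol y}=\prod_j(\partial/\partial y_j)^{\nu_j}$, and $(r_2\boldsymbol\rho)^{\boldsymbol\nu}=\prod_j(r_2\rho_j)^{\nu_j}$. *)

theory Defs
  imports "HOL-Probability.Probability"
begin

text \<open>The parameter domain U = [-1/2,1/2]^N. Coordinates are indexed from 0:
  y j stands for the paper's y_(j+1).\<close>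
definition cubeU :: "(nat \<Rightarrow> real) set" where
  "cubeU = {y. \<forall>j. y j \<in> {-1/2..1/2}}"

definition cube_measure :: "(nat \<Rightarrow> real) measure" where
  "cube_measure = (\<Pi>\<^sub>M j\<in>(UNIV::nat set). uniform_measure lborel {-1/2..1/2::real})"

definition multi_indices :: "(nat \<Rightarrow> nat) set" where
  "multi_indices = {\<nu>. finite {j. \<nu> j \<noteq> 0}}"

definition mi_order :: "(nat \<Rightarrow> nat) \<Rightarrow> nat" where
  "mi_order \<nu> = (\<Sum>j\<in>{j. \<nu> j \<noteq> 0}. \<nu> j)"

definition mi_power :: "(nat \<Rightarrow> real) \<Rightarrow> (nat \<Rightarrow> nat) \<Rightarrow> real" where
  "mi_power b \<nu> = (\<Prod>j\<in>{j. \<nu> j \<noteq> 0}. b j ^ \<nu> j)"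

definition trunc :: "nat \<Rightarrow> (nat \<Rightarrow> real) \<Rightarrow> (nat \<Rightarrow> real)" where
  "trunc s y = (\<lambda>j. if j < s then y j else 0)"

text \<open>D is the family of all mixed partial derivatives of g on U:
  D 0 = g on U, and for every multi-index nu and coordinate j, the partial
  derivative in y_j of D nu is D (nu + e_j) (one-sided at the endpoints).\<close>
definition partial_derivatives ::
    "((nat \<Rightarrow> real) \<Rightarrow> 'z::real_normed_vector) \<Rightarrow> ((nat \<Rightarrow> nat) \<Rightarrow> (nat \<Rightarrow> real) \<Rightarrow> 'z) \<Rightarrow> bool" where
  "partial_derivatives g D \<longleftrightarrow>
     (\<forall>y\<in>cubeU. D (\<lambda>_. 0) y = g y) \<and>
     (\<forall>\<nu>\<in>multi_indices. \<forall>j. \<forall>y\<in>cubeU.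
        ((\<lambda>t. D \<nu> (y(j := t))) has_vector_derivative D (\<nu>(j := Suc (\<nu> j))) y)
          (at (y j) within {-1/2..1/2}))"

end

theory Submission
  imports Defs
begin

text \<open>Write \<open>g y - g (trunc s y)\<close> as the telescoping sum of the increments
  \<open>g (trunc (j + 1) y) - g (trunc j y)\<close> for \<open>j \<ge> s\<close>; the part beyond a cut-off \<open>m\<close> is
  controlled by the first-derivative bounds and vanishes as \<open>m \<rightarrow> \<infinity>\<close>. The product measure
  is invariant under \<open>y j \<mapsto> - y j\<close>, so the integral of the \<open>j\<close>-th increment is half the
  integral of a symmetric second difference in the variable \<open>y j\<close>: the first-order terms cancel,
  and it is at most a quarter of the bound \<open>C0 * Gamma (r1 + 3) * (r2 * rho j)\<^sup>2\<close> on the second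
  derivative. Finally, an antitone \<open>p\<close>-summable sequence satisfies
  \<open>(j + 1) * rho j powr p \<le> (\<Sum>i. rho i powr p)\<close>, and comparing with \<open>x powr (1 - 2/p)\<close>
  gives \<open>(\<Sum>j\<ge>s. (j + 1) powr (- 2/p)) \<le> s powr (1 - 2/p) / (2/p - 1)\<close>.\<close>

lemma distr_uniform_measure_uminus:
  fixes a :: real
  shows "distr (uniform_measure lborel {-a..a}) (uniform_measure lborel {-a..a}) uminus
    = uniform_measure lborel {-a..a}"
proof (rule measure_eqI)
  fix A assume "A \<in> sets (distr (uniform_measure lborel {-a..a}) (uniform_measure lborel {-a..a}) uminus)"
  then have A: "A \<in> sets borel" by simp
  have "uminus -` A \<in> sets borel"
    using measurable_sets[of uminus borel borel A] A by simp
  have "{-a..a} \<inter> uminus -` A = uminus -` ({-a..a} \<inter> A)" by auto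
  then have "emeasure lborel ({-a..a} \<inter> uminus -` A) = emeasure (distr lborel borel uminus) ({-a..a} \<inter> A)"
    using A by (simp add: emeasure_distr)
  then show "emeasure (distr (uniform_measure lborel {-a..a}) (uniform_measure lborel {-a..a}) uminus) A
      = emeasure (uniform_measure lborel {-a..a}) A"
    using A \<open>uminus -` A \<in> sets borel\<close> by (simp add: emeasure_distr lborel_distr_uminus)
qed simp

lemma distr_PiM_update_component:
  assumes M: "\<And>i. i \<in> I \<Longrightarrow> prob_space (M i)" and j: "j \<in> I"
    and f: "f \<in> M j \<rightarrow>\<^sub>M M j" and preserving: "distr (M j) (M j) f = M j"
  shows "distr (\<Pi>\<^sub>M i\<in>I. M i) (\<Pi>\<^sub>M i\<in>I. M i) (\<lambda>x. x(j := f (x j))) = (\<Pi>\<^sub>M i\<in>I. M i)"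
    (is "distr ?P ?P ?u = ?P")
proof (rule measure_eqI_PiM_infinite[symmetric, OF refl])
  interpret prob_space ?P using M by (rule prob_space_PiM)
  show "finite_measure ?P" by unfold_locales
  have u: "?u \<in> ?P \<rightarrow>\<^sub>M ?P"
  proof -
    have "?u = (\<lambda>x i. if i = j then f (x j) else x i)" by (auto simp: fun_eq_iff)
    also have "\<dots> \<in> ?P \<rightarrow>\<^sub>M ?P"
    proof (rule measurable_PiM_single')
      show "(\<lambda>x. if i = j then f (x j) else x i) \<in> ?P \<rightarrow>\<^sub>M M i" if "i \<in> I" for i
        using that measurable_compose[OF measurable_component_singleton[OF j, of M] f]
        by (cases "i = j") auto
      show "(\<lambda>x i. if i = j then f (x j) else x i) \<in> space ?P \<rightarrow> (\<Pi>\<^sub>E i\<in>I. space (M i))"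
        using j measurable_space[OF f] by (auto simp: space_PiM PiE_iff extensional_def)
    qed
    finally show ?thesis .
  qed
  fix J A assume J: "finite J" "J \<subseteq> I" and A: "\<And>i. i \<in> J \<Longrightarrow> A i \<in> sets (M i)"
  define A' where "A' i = (if i = j then f -` A i \<inter> space (M j) else A i)" for i
  have A': "A' i \<in> sets (M i)" if "i \<in> J" for i
    using A[OF that] f by (auto simp: A'_def)
  have "?u -` prod_emb I M J (Pi\<^sub>E J A) \<inter> space ?P = prod_emb I M J (Pi\<^sub>E J A')"
  proof (intro set_eqI iffI)
    fix x assume "x \<in> ?u -` prod_emb I M J (Pi\<^sub>E J A) \<inter> space ?P"
    then show "x \<in> prod_emb I M J (Pi\<^sub>E J A')"
      using j by (auto simp: prod_emb_def space_PiM A'_def PiE_iff)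
  next
    fix x assume x: "x \<in> prod_emb I M J (Pi\<^sub>E J A')"
    then have "?u x \<in> space ?P"
      using j by (auto simp: prod_emb_def space_PiM A'_def PiE_iff extensional_def measurable_space[OF f])
    with x show "x \<in> ?u -` prod_emb I M J (Pi\<^sub>E J A) \<inter> space ?P"
      using j by (auto simp: prod_emb_def space_PiM A'_def PiE_iff)
  qed
  then have "distr ?P ?P ?u (prod_emb I M J (Pi\<^sub>E J A)) = (\<Prod>i\<in>J. emeasure (M i) (A' i))"
    using J A A' u M by (simp add: emeasure_distr sets_PiM_I emeasure_PiM_emb)
  also have "\<dots> = (\<Prod>i\<in>J. emeasure (M i) (A i))"
  proof (rule prod.cong)
    fix i assume "i \<in> J"
    then have "emeasure (M j) (f -` A i \<inter> space (M j)) = emeasure (M i) (A i)" if "i = j"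
      using that A f emeasure_distr[OF f, of "A j"] by (simp add: preserving)
    then show "emeasure (M i) (A' i) = emeasure (M i) (A i)" by (simp add: A'_def)
  qed simp
  also have "\<dots> = ?P (prod_emb I M J (Pi\<^sub>E J A))"
    using J A M by (simp add: emeasure_PiM_emb)
  finally show "?P (prod_emb I M J (Pi\<^sub>E J A)) = distr ?P ?P ?u (prod_emb I M J (Pi\<^sub>E J A))" ..
qed simp

lemma sets_cube_measure: "sets cube_measure = sets (borel :: (nat \<Rightarrow> real) measure)"
proof -
  have "sets cube_measure = sets (\<Pi>\<^sub>M j\<in>(UNIV::nat set). (borel :: real measure))"
    unfolding cube_measure_def by (rule sets_PiM_cong) auto
  then show ?thesis by (simp add: sets_PiM_equal_borel)
qed

lemma prob_space_cube_measure: "prob_space cube_measure"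
  unfolding cube_measure_def by (intro prob_space_PiM prob_space_uniform_measure) auto

lemma AE_cube_measure_cubeU: "AE y in cube_measure. y \<in> cubeU"
proof -
  have "AE y in cube_measure. \<forall>j. y j \<in> {-1/2..1/2}"
    unfolding AE_all_countable cube_measure_def
    by (intro allI AE_PiM_component) (auto intro!: AE_uniform_measureI prob_space_uniform_measure)
  then show ?thesis by (simp add: cubeU_def)
qed

lemma continuous_on_imp_measurable_cube:
  "continuous_on UNIV f \<Longrightarrow> f \<in> borel_measurable cube_measure"
  using borel_measurable_continuous_onI measurable_cong_sets[OF sets_cube_measure refl] by blast

lemma continuous_on_reflect_coordinate: "continuous_on UNIV (\<lambda>y::nat \<Rightarrow> real. y(j := - y j))"
proof (rule continuous_on_coordinatewise_then_product)
  show "continuous_on UNIV (\<lambda>y::nat \<Rightarrow> real. (y(j := - y j)) i)" for i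
    by (cases "i = j") (auto intro!: continuous_intros)
qed

lemma measurable_reflect_coordinate: "(\<lambda>y. y(j := - y j)) \<in> cube_measure \<rightarrow>\<^sub>M cube_measure"
  using continuous_on_imp_measurable_cube[OF continuous_on_reflect_coordinate]
  by (simp add: measurable_cong_sets[OF refl sets_cube_measure])

lemma integral_reflect_coordinate:
  fixes f :: "(nat \<Rightarrow> real) \<Rightarrow> 'z::{banach, second_countable_topology}"
  assumes f: "f \<in> borel_measurable cube_measure"
  shows "(\<integral>y. f (y(j := - y j)) \<partial>cube_measure) = integral\<^sup>L cube_measure f"
proof -
  have "uminus \<in> uniform_measure lborel {-1/2..1/2::real} \<rightarrow>\<^sub>M uniform_measure lborel {-1/2..1/2}"
    by (simp add: measurable_cong_sets[OF sets_uniform_measure sets_uniform_measure])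
  then have "distr cube_measure cube_measure (\<lambda>y. y(j := - y j)) = cube_measure"
    unfolding cube_measure_def
    using distr_uniform_measure_uminus[of "1/2"]
    by (intro distr_PiM_update_component prob_space_uniform_measure) auto
  then show ?thesis
    using integral_distr[OF measurable_reflect_coordinate[of j] f] by simp
qed

lemma norm_diff_le_of_vector_derivative_bound:
  fixes F F' :: "real \<Rightarrow> 'z::real_normed_vector"
  assumes "convex S"
    and "\<And>t. t \<in> S \<Longrightarrow> (F has_vector_derivative F' t) (at t within S)"
    and "\<And>t. t \<in> S \<Longrightarrow> norm (F' t) \<le> B"
    and "x \<in> S" "y \<in> S"
  shows "norm (F x - F y) \<le> B * \<bar>x - y\<bar>"
  using differentiable_bound[OF assms(1), of F "\<lambda>t h. h *\<^sub>R F' t" B x y] assms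
  by (force simp: has_vector_derivative_def mult.commute[of B] intro!: onorm_le mult_left_mono)

lemma norm_symmetric_second_difference_le:
  fixes F F' F'' :: "real \<Rightarrow> 'z::real_normed_vector"
  assumes F': "\<And>t. t \<in> {-a..a} \<Longrightarrow> (F has_vector_derivative F' t) (at t within {-a..a})"
    and F'': "\<And>t. t \<in> {-a..a} \<Longrightarrow> (F' has_vector_derivative F'' t) (at t within {-a..a})"
    and bound: "\<And>t. t \<in> {-a..a} \<Longrightarrow> norm (F'' t) \<le> B"
    and t: "t \<in> {-a..a}"
  shows "norm (F t + F (-t) - 2 *\<^sub>R F 0) \<le> 2 * B * t\<^sup>2"
proof -
  define S where "S = {-\<bar>t\<bar>..\<bar>t\<bar>}"
  have S: "S \<subseteq> {-a..a}" "uminus ` S = S"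
    using t by (auto simp: S_def image_iff intro!: exI[where x="- _"])
  have even_part_deriv: "((\<lambda>u. F u + F (-u)) has_vector_derivative (F' u - F' (-u))) (at u within S)"
    if u: "u \<in> S" for u
  proof -
    have "((F \<circ> uminus) has_vector_derivative (-1) *\<^sub>R F' (-u)) (at u within S)"
      using has_vector_derivative_within_subset[OF F' S(1)] u S
      by (intro vector_diff_chain_within) (auto intro!: derivative_eq_intros)
    with has_vector_derivative_within_subset[OF F' S(1)] u S show ?thesis
      by (auto intro!: derivative_eq_intros simp: o_def)
  qed
  have even_part_deriv_bound: "norm (F' u - F' (-u)) \<le> 2 * B * \<bar>t\<bar>" if u: "u \<in> S" for u
  proof -
    have "norm (F' u - F' (-u)) \<le> B * \<bar>u - (-u)\<bar>"
      by (rule norm_diff_le_of_vector_derivative_bound[OF _ F'' bound]) (use u S in auto)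
    also have "\<dots> \<le> B * (2 * \<bar>t\<bar>)"
      using u order_trans[OF norm_ge_zero bound[of 0]] t by (intro mult_left_mono) (auto simp: S_def)
    finally show ?thesis by simp
  qed
  have "norm ((F t + F (-t)) - (F 0 + F (-0))) \<le> (2 * B * \<bar>t\<bar>) * \<bar>t - 0\<bar>"
    by (rule norm_diff_le_of_vector_derivative_bound[OF _ even_part_deriv even_part_deriv_bound])
      (auto simp: S_def)
  then show ?thesis by (simp add: scaleR_2 power2_eq_square)
qed

lemma powr_add_one_le_diff_powr:
  fixes q x :: real
  assumes q: "q > 1" and x: "x > 0"
  shows "(x + 1) powr (-q) \<le> (x powr (1 - q) - (x + 1) powr (1 - q)) / (q - 1)"
proof -
  have "\<exists>z>x. z < x + 1 \<and>
      (x + 1) powr (1 - q) - x powr (1 - q) = ((x + 1) - x) * ((1 - q) * z powr (1 - q - 1))"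
    using x by (intro MVT2) (auto intro!: has_real_derivative_powr[of _ "1 - q", simplified])
  then obtain z where z: "x < z" "z < x + 1"
    and mvt: "(x + 1) powr (1 - q) - x powr (1 - q) = (1 - q) * z powr (-q)"
    by auto
  have "(q - 1) * (x + 1) powr (-q) \<le> (q - 1) * z powr (-q)"
    using q x z by (intro mult_left_mono powr_mono2') auto
  also have "\<dots> = x powr (1 - q) - (x + 1) powr (1 - q)"
    using mvt by (simp add: algebra_simps)
  finally show ?thesis
    using q by (simp add: field_simps)
qed

lemma sum_powr_tail_le:
  fixes q :: real
  assumes q: "q > 1" and s: "s \<ge> 1"
  shows "(\<Sum>j\<in>{s..<m}. (real j + 1) powr (-q)) \<le> real s powr (1 - q) / (q - 1)"
proof (cases "s \<le> m")
  case True
  define f where "f j = real j powr (1 - q)" for j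
  have "(\<Sum>j\<in>{s..<m}. (real j + 1) powr (-q)) \<le> (\<Sum>j\<in>{s..<m}. (f j - f (Suc j)) / (q - 1))"
  proof (rule sum_mono)
    fix j assume "j \<in> {s..<m}"
    then have "real j > 0" using s by auto
    from powr_add_one_le_diff_powr[OF q this]
    show "(real j + 1) powr (-q) \<le> (f j - f (Suc j)) / (q - 1)" by (simp add: f_def add.commute)
  qed
  also have "\<dots> = (f s - f m) / (q - 1)"
  proof -
    have "(\<Sum>j\<in>{s..<m}. f j - f (Suc j)) = f s - f m"
      using sum_Suc_diff'[OF True, of f] by (simp add: sum_subtractf)
    then show ?thesis by (simp add: sum_divide_distrib[symmetric])
  qed
  also have "\<dots> \<le> f s / (q - 1)"
    using q by (intro divide_right_mono) (auto simp: f_def)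
  finally show ?thesis by (simp add: f_def)
qed (use q in simp)

locale antitone_p_summable =
  fixes p :: real and rho :: "nat \<Rightarrow> real"
  assumes p_pos: "0 < p"
    and summable_powr: "summable (\<lambda>j. \<bar>rho j\<bar> powr p)"
    and antimono: "antimono rho"
begin

definition powr_sum :: real where "powr_sum = (\<Sum>j. \<bar>rho j\<bar> powr p)"

lemma powr_sum_nonneg: "powr_sum \<ge> 0"
  unfolding powr_sum_def by (rule suminf_nonneg[OF summable_powr]) simp

lemma nonneg: "rho j \<ge> 0"
proof (rule ccontr)
  assume "\<not> rho j \<ge> 0"
  \<comment> \<open>Then \<open>\<bar>rho i\<bar> \<ge> \<bar>rho j\<bar> > 0\<close> for all \<open>i \<ge> j\<close>, contradicting \<open>\<bar>rho i\<bar> powr p \<longlonglongrightarrow> 0\<close>.\<close>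
  then have "\<bar>rho j\<bar> powr p \<le> \<bar>rho i\<bar> powr p" if "i \<ge> j" for i
  proof -
    have "rho i \<le> rho j" using that antimono by (simp add: antimono_def)
    with \<open>\<not> rho j \<ge> 0\<close> p_pos show ?thesis by (intro powr_mono2) auto
  qed
  then have "\<bar>rho j\<bar> powr p \<le> 0"
    using summable_LIMSEQ_zero[OF summable_powr]
    by (intro LIMSEQ_le_const[of "\<lambda>i. \<bar>rho i\<bar> powr p"]) auto
  with \<open>\<not> rho j \<ge> 0\<close> show False by simp
qed

lemma powr_le_powr_sum_div: "rho j powr p \<le> powr_sum / (real j + 1)"
proof -
  have "(real j + 1) * rho j powr p = (\<Sum>i\<le>j. rho j powr p)" by simp
  also have "\<dots> \<le> (\<Sum>i\<le>j. \<bar>rho i\<bar> powr p)"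
    using antimono nonneg p_pos by (intro sum_mono powr_mono2) (auto simp: antimono_def)
  also have "\<dots> \<le> powr_sum"
    unfolding powr_sum_def by (rule sum_le_suminf[OF summable_powr]) auto
  finally show ?thesis by (simp add: field_simps)
qed

lemma powr_decay: "0 < q \<Longrightarrow> rho j powr q \<le> powr_sum powr (q / p) * (real j + 1) powr (- (q / p))"
proof -
  assume q: "0 < q"
  have "(rho j powr p) powr (q / p) \<le> (powr_sum / (real j + 1)) powr (q / p)"
    using powr_le_powr_sum_div p_pos q by (intro powr_mono2) auto
  also have "(powr_sum / (real j + 1)) powr (q / p) = powr_sum powr (q / p) * (real j + 1) powr (- (q / p))"
    using powr_sum_nonneg by (subst powr_divide) (simp_all add: powr_minus divide_inverse)
  finally show ?thesis
    using nonneg p_pos by (simp add: powr_powr)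
qed

lemma summable_powr_gt: "p < q \<Longrightarrow> summable (\<lambda>j. rho j powr q)"
proof (rule summable_comparison_test)
  assume q: "p < q"
  show "\<exists>N. \<forall>j\<ge>N. norm (rho j powr q) \<le> powr_sum powr (q / p) * (real j + 1) powr (- (q / p))"
    using powr_decay q p_pos by auto
  have "summable (\<lambda>j. real (Suc j) powr (- (q / p)))"
    using q p_pos by (subst summable_Suc_iff) (simp add: summable_real_powr_iff field_simps)
  then show "summable (\<lambda>j. powr_sum powr (q / p) * (real j + 1) powr (- (q / p)))"
    by (intro summable_mult) (simp add: add.commute)
qed

lemma suminf_tail_powr_le:
  assumes q: "p < q" and s: "s \<ge> 1"
  shows "(\<Sum>j. rho (j + s) powr q) \<le> powr_sum powr (q / p) * real s powr (1 - q / p) / (q / p - 1)"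
proof (rule suminf_le_const)
  show "summable (\<lambda>j. rho (j + s) powr q)"
    using summable_ignore_initial_segment[OF summable_powr_gt[OF q]] .
  have q_p: "q / p > 1" using q p_pos by (simp add: field_simps)
  fix n
  have "(\<Sum>j<n. rho (j + s) powr q) \<le> (\<Sum>j<n. powr_sum powr (q / p) * (real (j + s) + 1) powr (- (q / p)))"
  proof (rule sum_mono)
    fix j
    show "rho (j + s) powr q \<le> powr_sum powr (q / p) * (real (j + s) + 1) powr (- (q / p))"
      using powr_decay[of q "j + s"] q p_pos by simp
  qed
  also have "\<dots> = powr_sum powr (q / p) * (\<Sum>j\<in>{s..<n + s}. (real j + 1) powr (- (q / p)))"
    using sum.shift_bounds_nat_ivl[of "\<lambda>j. (real j + 1) powr (- (q / p))" 0 s n]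
    by (simp add: sum_distrib_left atLeast0LessThan)
  also have "\<dots> \<le> powr_sum powr (q / p) * (real s powr (1 - q / p) / (q / p - 1))"
    using sum_powr_tail_le[OF q_p s] by (intro mult_left_mono) auto
  finally show "(\<Sum>j<n. rho (j + s) powr q) \<le> powr_sum powr (q / p) * real s powr (1 - q / p) / (q / p - 1)"
    by simp
qed

end

lemma fun_upd_in_cubeU: "y \<in> cubeU \<Longrightarrow> t \<in> {-1/2..1/2} \<Longrightarrow> y(j := t) \<in> cubeU"
  by (auto simp: cubeU_def)

lemma cubeU_component: "y \<in> cubeU \<Longrightarrow> y j \<in> {-1/2..1/2}"
  by (auto simp: cubeU_def)

lemma zero_in_cubeU: "(\<lambda>_. 0) \<in> cubeU"
  by (auto simp: cubeU_def)

lemma trunc_in_cubeU: "y \<in> cubeU \<Longrightarrow> trunc k y \<in> cubeU"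
  by (auto simp: trunc_def cubeU_def)

lemma trunc_0: "trunc 0 y = (\<lambda>_. 0)"
  by (simp add: trunc_def)

lemma trunc_Suc: "trunc (Suc j) y = (trunc j y)(j := y j)"
  by (auto simp: trunc_def fun_eq_iff)

lemma trunc_fun_upd_self: "trunc j (y(j := t)) = trunc j y" "(trunc j y)(j := 0) = trunc j y"
  by (auto simp: trunc_def fun_eq_iff)

lemma continuous_on_trunc: "continuous_on UNIV (trunc k)"
proof (rule continuous_on_coordinatewise_then_product)
  show "continuous_on UNIV (\<lambda>y. trunc k y i)" for i
    by (cases "i < k") (auto simp: trunc_def)
qed

lemma trunc_tendsto: "(\<lambda>n. trunc n y) \<longlonglongrightarrow> y"
proof -
  have "((\<lambda>n. trunc n y i) \<longlongrightarrow> y i) sequentially" for i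
    by (rule tendsto_eventually) (auto simp: trunc_def eventually_sequentially intro!: exI[of _ "Suc i"])
  then have "limitin (product_topology (\<lambda>i. euclidean) UNIV) (\<lambda>n. trunc n y) y sequentially"
    by (simp add: limitin_componentwise)
  then show ?thesis by (simp add: euclidean_product_topology)
qed

text \<open>The nearest point of \<open>cubeU\<close>; composing with it extends \<open>g\<close> continuously to all sequences.\<close>
definition clamp_cube :: "(nat \<Rightarrow> real) \<Rightarrow> (nat \<Rightarrow> real)" where
  "clamp_cube y = (\<lambda>j. max (-1/2) (min (1/2) (y j)))"

lemma clamp_cube_in_cubeU: "clamp_cube y \<in> cubeU"
  by (auto simp: clamp_cube_def cubeU_def)

lemma clamp_cube_id: "y \<in> cubeU \<Longrightarrow> clamp_cube y = y"
  by (auto simp: clamp_cube_def cubeU_def fun_eq_iff)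

lemma clamp_cube_trunc: "clamp_cube (trunc k y) = trunc k (clamp_cube y)"
  by (auto simp: clamp_cube_def trunc_def fun_eq_iff)

lemma clamp_cube_reflect: "clamp_cube (y(j := - y j)) = (clamp_cube y)(j := - clamp_cube y j)"
  by (auto simp: clamp_cube_def fun_eq_iff)

lemma continuous_on_clamp_cube: "continuous_on UNIV clamp_cube"
  unfolding clamp_cube_def
  by (intro continuous_on_coordinatewise_then_product continuous_intros continuous_on_product_coordinates)

lemma (in prob_space) norm_integral_le_const:
  fixes f :: "'a \<Rightarrow> 'b::{banach, second_countable_topology}"
  assumes "\<And>x. x \<in> space M \<Longrightarrow> norm (f x) \<le> B"
  shows "norm (integral\<^sup>L M f) \<le> B"
proof (cases "integrable M f")
  case True
  have "norm (integral\<^sup>L M f) \<le> (\<integral>x. norm (f x) \<partial>M)"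
    by (rule integral_norm_bound)
  also have "\<dots> \<le> (\<integral>x. B \<partial>M)"
    using True assms by (intro integral_mono) auto
  finally show ?thesis by (simp add: prob_space)
next
  case False
  obtain x where "x \<in> space M" using not_empty by blast
  with assms[of x] False show ?thesis
    by (simp add: not_integrable_integral_eq order_trans[OF norm_ge_zero])
qed

lemma integrable_cube_measure_continuous:
  fixes f :: "(nat \<Rightarrow> real) \<Rightarrow> 'z::{banach, second_countable_topology}"
  assumes "continuous_on UNIV f" and "\<And>y. norm (f y) \<le> B"
  shows "integrable cube_measure f"
  using assms continuous_on_imp_measurable_cube
  by (intro finite_measure.integrable_const_bound[where B=B] prob_space.finite_measure
      prob_space_cube_measure) auto

locale coordinatewise_C2_on_cube =
  fixes g :: "(nat \<Rightarrow> real) \<Rightarrow> 'z::{banach, second_countable_topology}"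
    and g' g'' :: "nat \<Rightarrow> (nat \<Rightarrow> real) \<Rightarrow> 'z"
    and L Q :: "nat \<Rightarrow> real"
  assumes continuous: "continuous_on cubeU g"
    and has_derivative_g: "\<And>j y. y \<in> cubeU \<Longrightarrow>
      ((\<lambda>t. g (y(j := t))) has_vector_derivative g' j y) (at (y j) within {-1/2..1/2})"
    and has_derivative_g': "\<And>j y. y \<in> cubeU \<Longrightarrow>
      ((\<lambda>t. g' j (y(j := t))) has_vector_derivative g'' j y) (at (y j) within {-1/2..1/2})"
    and norm_g'_le: "\<And>j y. y \<in> cubeU \<Longrightarrow> norm (g' j y) \<le> L j"
    and norm_g''_le: "\<And>j y. y \<in> cubeU \<Longrightarrow> norm (g'' j y) \<le> Q j"
    and summable_L: "summable L"
begin

lemma L_nonneg: "L j \<ge> 0"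
  using norm_g'_le[OF zero_in_cubeU] order_trans[OF norm_ge_zero] by blast

lemma Q_nonneg: "Q j \<ge> 0"
  using norm_g''_le[OF zero_in_cubeU] order_trans[OF norm_ge_zero] by blast

lemma has_derivative_g_line:
  assumes "y \<in> cubeU" "t \<in> {-1/2..1/2}"
  shows "((\<lambda>t. g (y(j := t))) has_vector_derivative g' j (y(j := t))) (at t within {-1/2..1/2})"
    and "((\<lambda>t. g' j (y(j := t))) has_vector_derivative g'' j (y(j := t))) (at t within {-1/2..1/2})"
  using has_derivative_g[OF fun_upd_in_cubeU[OF assms, of j], of j]
    has_derivative_g'[OF fun_upd_in_cubeU[OF assms, of j], of j]
  by simp_all

lemma norm_diff_fun_upd_le:
  assumes "y \<in> cubeU" "x \<in> {-1/2..1/2}" "x' \<in> {-1/2..1/2}"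
  shows "norm (g (y(j := x)) - g (y(j := x'))) \<le> L j * \<bar>x - x'\<bar>"
  using assms
  by (intro norm_diff_le_of_vector_derivative_bound[OF _ has_derivative_g_line(1)]
      norm_g'_le fun_upd_in_cubeU) auto

lemma norm_second_difference_fun_upd_le:
  assumes "y \<in> cubeU" "t \<in> {-1/2..1/2}"
  shows "norm (g (y(j := t)) + g (y(j := -t)) - 2 *\<^sub>R g (y(j := 0))) \<le> 2 * Q j * t\<^sup>2"
  by (rule norm_symmetric_second_difference_le[where F="\<lambda>t. g (y(j := t))" and F'="\<lambda>t. g' j (y(j := t))"
      and F''="\<lambda>t. g'' j (y(j := t))" and a="1/2"])
    (use assms in \<open>auto intro!: has_derivative_g_line[simplified] norm_g''_le fun_upd_in_cubeU\<close>)

lemma norm_diff_trunc_le: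
  assumes y: "y \<in> cubeU" and "m \<le> n"
  shows "norm (g (trunc n y) - g (trunc m y)) \<le> (\<Sum>j\<in>{m..<n}. L j) / 2"
  using \<open>m \<le> n\<close>
proof (induction n rule: dec_induct)
  case (step k)
  have "norm (g (trunc (Suc k) y) - g (trunc k y)) \<le> L k * \<bar>y k - 0\<bar>"
    using norm_diff_fun_upd_le[OF trunc_in_cubeU[OF y, of k] cubeU_component[OF y, of k], of 0 k]
    by (simp add: trunc_Suc trunc_fun_upd_self)
  also have "\<dots> \<le> L k / 2"
    using cubeU_component[OF y, of k] L_nonneg[of k] mult_left_mono[of "\<bar>y k\<bar>" "1/2" "L k"] by auto
  finally have "norm (g (trunc (Suc k) y) - g (trunc k y)) \<le> L k / 2" .
  from norm_diff_triangle_le[OF this step.IH] show ?case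
    using step.hyps by (simp add: sum.atLeastLessThan_Suc add_divide_distrib)
qed simp

lemma norm_diff_trunc_tail_le:
  assumes y: "y \<in> cubeU"
  shows "norm (g y - g (trunc m y)) \<le> (\<Sum>j. L (j + m)) / 2"
proof (rule LIMSEQ_le_const2)
  have "(\<lambda>n. g (trunc (n + m) y)) \<longlonglongrightarrow> g y"
    using LIMSEQ_ignore_initial_segment[OF trunc_tendsto[of y], where k=m] y
    by (intro continuous_on_tendsto_compose[OF continuous]) (auto simp: trunc_in_cubeU[OF y])
  then show "(\<lambda>n. norm (g (trunc (n + m) y) - g (trunc m y))) \<longlonglongrightarrow> norm (g y - g (trunc m y))"
    by (intro tendsto_intros)
  have "norm (g (trunc (n + m) y) - g (trunc m y)) \<le> (\<Sum>j. L (j + m)) / 2" for n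
  proof -
    have "(\<Sum>j\<in>{m..<n + m}. L j) = (\<Sum>j<n. L (j + m))"
      using sum.shift_bounds_nat_ivl[of L 0 m n] by (simp add: atLeast0LessThan)
    also have "\<dots> \<le> (\<Sum>j. L (j + m))"
      using summable_ignore_initial_segment[OF summable_L] L_nonneg by (intro sum_le_suminf) auto
    finally show ?thesis
      using norm_diff_trunc_le[OF y, of m "n + m"] by simp
  qed
  then show "\<exists>N. \<forall>n\<ge>N. norm (g (trunc (n + m) y) - g (trunc m y)) \<le> (\<Sum>j. L (j + m)) / 2"
    by blast
qed

definition g_ext :: "(nat \<Rightarrow> real) \<Rightarrow> 'z" where
  "g_ext y = g (clamp_cube y)"

definition increment :: "nat \<Rightarrow> (nat \<Rightarrow> real) \<Rightarrow> 'z" where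
  "increment j y = g_ext (trunc (Suc j) y) - g_ext (trunc j y)"

lemma continuous_on_g_ext: "continuous_on UNIV g_ext"
  unfolding g_ext_def
  by (rule continuous_on_compose2[OF continuous continuous_on_clamp_cube]) (auto intro: clamp_cube_in_cubeU)

lemma continuous_on_g_ext_trunc: "continuous_on UNIV (\<lambda>y. g_ext (trunc k y))"
  by (rule continuous_on_compose2[OF continuous_on_g_ext continuous_on_trunc]) auto

lemma norm_g_ext_le: "norm (g_ext y) \<le> norm (g (\<lambda>_. 0)) + (\<Sum>j. L j) / 2"
  using norm_diff_trunc_tail_le[OF clamp_cube_in_cubeU, of y 0] norm_triangle_sub[of "g_ext y" "g (\<lambda>_. 0)"]
  by (simp add: g_ext_def trunc_0 zero_in_cubeU)

lemma integrable_g_ext_trunc: "integrable cube_measure (\<lambda>y. g_ext (trunc k y))"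
  by (rule integrable_cube_measure_continuous[OF continuous_on_g_ext_trunc norm_g_ext_le])

lemma integrable_g_ext: "integrable cube_measure g_ext"
  by (rule integrable_cube_measure_continuous[OF continuous_on_g_ext norm_g_ext_le])

lemma increment_eq:
  "increment j y = g ((trunc j (clamp_cube y))(j := clamp_cube y j)) - g ((trunc j (clamp_cube y))(j := 0))"
  unfolding increment_def g_ext_def clamp_cube_trunc by (simp add: trunc_Suc trunc_fun_upd_self)

lemma norm_increment_le: "norm (increment j y) \<le> L j / 2"
proof -
  have "norm (increment j y) \<le> L j * \<bar>clamp_cube y j - 0\<bar>"
    unfolding increment_eq using cubeU_component[OF clamp_cube_in_cubeU, of y j]
    by (intro norm_diff_fun_upd_le trunc_in_cubeU clamp_cube_in_cubeU) auto
  also have "\<dots> \<le> L j * (1/2)"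
    using cubeU_component[OF clamp_cube_in_cubeU, of y j] L_nonneg by (intro mult_left_mono) auto
  finally show ?thesis by simp
qed

lemma norm_increment_add_reflect_le: "norm (increment j y + increment j (y(j := - y j))) \<le> Q j / 2"
proof -
  define c where "c = clamp_cube y"
  have c: "trunc j c \<in> cubeU" "c j \<in> {-1/2..1/2}"
    unfolding c_def by (rule trunc_in_cubeU clamp_cube_in_cubeU cubeU_component[OF clamp_cube_in_cubeU])+
  have "increment j y + increment j (y(j := - y j))
      = g ((trunc j c)(j := c j)) + g ((trunc j c)(j := - c j)) - 2 *\<^sub>R g ((trunc j c)(j := 0))"
    by (simp add: increment_eq clamp_cube_reflect trunc_fun_upd_self scaleR_2 c_def)
  then have "norm (increment j y + increment j (y(j := - y j))) \<le> 2 * Q j * (c j)\<^sup>2"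
    using norm_second_difference_fun_upd_le[OF c] by simp
  also have "\<dots> \<le> 2 * Q j * (1/2)\<^sup>2"
  proof -
    have "(c j)\<^sup>2 \<le> (1/2)\<^sup>2" using c(2) by (subst power2_le_iff_abs_le) auto
    then show ?thesis using Q_nonneg[of j] by (intro mult_left_mono) auto
  qed
  finally show ?thesis by (simp add: power2_eq_square)
qed

lemma norm_integral_increment_le: "norm (integral\<^sup>L cube_measure (increment j)) \<le> Q j / 4"
proof -
  have cont: "continuous_on UNIV (increment j)"
    unfolding increment_def by (intro continuous_on_diff continuous_on_g_ext_trunc)
  then have meas: "increment j \<in> borel_measurable cube_measure"
    by (rule continuous_on_imp_measurable_cube)
  have "integrable cube_measure (\<lambda>y. increment j (y(j := - y j)))"
    using continuous_on_compose2[OF cont continuous_on_reflect_coordinate] norm_increment_le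
    by (intro integrable_cube_measure_continuous[where B="L j / 2"]) auto
  then have "(\<integral>y. increment j y + increment j (y(j := - y j)) \<partial>cube_measure)
      = 2 *\<^sub>R integral\<^sup>L cube_measure (increment j)"
    using integrable_cube_measure_continuous[OF cont norm_increment_le] integral_reflect_coordinate[OF meas]
    by (simp add: scaleR_2)
  moreover have "norm (\<integral>y. increment j y + increment j (y(j := - y j)) \<partial>cube_measure) \<le> Q j / 2"
    by (rule prob_space.norm_integral_le_const[OF prob_space_cube_measure norm_increment_add_reflect_le])
  ultimately show ?thesis by simp
qed

lemma norm_integral_g_ext_diff_trunc_le_split:
  assumes "s \<le> m"
  shows "norm (\<integral>y. g_ext y - g_ext (trunc s y) \<partial>cube_measure)
    \<le> (\<Sum>j\<in>{s..<m}. Q j) / 4 + (\<Sum>j. L (j + m)) / 2"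
proof -
  have telescope: "g_ext y - g_ext (trunc s y) = (\<Sum>j\<in>{s..<m}. increment j y) + (g_ext y - g_ext (trunc m y))"
    for y using sum_Suc_diff'[OF assms, of "\<lambda>k. g_ext (trunc k y)"] by (simp add: increment_def)
  have integrable_increment: "integrable cube_measure (increment j)" for j
    unfolding increment_def by (intro Bochner_Integration.integrable_diff integrable_g_ext_trunc)
  have "(\<integral>y. g_ext y - g_ext (trunc s y) \<partial>cube_measure)
      = (\<Sum>j\<in>{s..<m}. integral\<^sup>L cube_measure (increment j)) + (\<integral>y. g_ext y - g_ext (trunc m y) \<partial>cube_measure)"
    unfolding telescope using integrable_increment integrable_g_ext integrable_g_ext_trunc
    by (simp add: Bochner_Integration.integral_sum)
  moreover have "norm (\<Sum>j\<in>{s..<m}. integral\<^sup>L cube_measure (increment j)) \<le> (\<Sum>j\<in>{s..<m}. Q j) / 4"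
    using norm_sum[of "\<lambda>j. integral\<^sup>L cube_measure (increment j)" "{s..<m}"]
      sum_mono[of "{s..<m}" "\<lambda>j. norm (integral\<^sup>L cube_measure (increment j))" "\<lambda>j. Q j / 4"]
      norm_integral_increment_le
    by (simp add: sum_divide_distrib)
  moreover have "norm (\<integral>y. g_ext y - g_ext (trunc m y) \<partial>cube_measure) \<le> (\<Sum>j. L (j + m)) / 2"
    using norm_diff_trunc_tail_le[OF clamp_cube_in_cubeU]
    by (intro prob_space.norm_integral_le_const[OF prob_space_cube_measure])
      (simp add: g_ext_def clamp_cube_trunc)
  ultimately show ?thesis
    by (metis (no_types, lifting) add_mono norm_triangle_le)
qed

lemma norm_integral_g_ext_diff_trunc_le:
  assumes "summable Q"
  shows "norm (\<integral>y. g_ext y - g_ext (trunc s y) \<partial>cube_measure) \<le> (\<Sum>j. Q (j + s)) / 4"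
proof (rule LIMSEQ_le_const)
  show "(\<lambda>m. (\<Sum>j. Q (j + s)) / 4 + (\<Sum>j. L (j + m)) / 2) \<longlonglongrightarrow> (\<Sum>j. Q (j + s)) / 4"
    using suminf_exist_split2[OF summable_L] by (auto intro!: tendsto_eq_intros)
  have "norm (\<integral>y. g_ext y - g_ext (trunc s y) \<partial>cube_measure) \<le> (\<Sum>j. Q (j + s)) / 4 + (\<Sum>j. L (j + m)) / 2"
    if "s \<le> m" for m
  proof -
    have "(\<Sum>j\<in>{s..<m}. Q j) = (\<Sum>j<m - s. Q (j + s))"
      using sum.shift_bounds_nat_ivl[of Q 0 s "m - s"] that by (simp add: atLeast0LessThan)
    also have "\<dots> \<le> (\<Sum>j. Q (j + s))"
      using summable_ignore_initial_segment[OF assms] Q_nonneg by (intro sum_le_suminf) auto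
    finally show ?thesis
      using norm_integral_g_ext_diff_trunc_le_split[OF that] by simp
  qed
  then show "\<exists>N. \<forall>m\<ge>N. norm (\<integral>y. g_ext y - g_ext (trunc s y) \<partial>cube_measure)
      \<le> (\<Sum>j. Q (j + s)) / 4 + (\<Sum>j. L (j + m)) / 2"
    by blast
qed

lemma norm_integral_diff_trunc_le:
  assumes "summable Q"
  shows "norm (\<integral>y. g y - g (trunc s y) \<partial>cube_measure) \<le> (\<Sum>j. Q (j + s)) / 4"
proof (cases "integrable cube_measure (\<lambda>y. g y - g (trunc s y))")
  case True
  have ext: "integrable cube_measure (\<lambda>y. g_ext y - g_ext (trunc s y))"
    by (intro Bochner_Integration.integrable_diff integrable_g_ext integrable_g_ext_trunc)
  have "AE y in cube_measure. g y - g (trunc s y) = g_ext y - g_ext (trunc s y)"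
    using AE_cube_measure_cubeU by eventually_elim (simp add: g_ext_def clamp_cube_id trunc_in_cubeU)
  from integral_cong_AE[OF borel_measurable_integrable[OF True] borel_measurable_integrable[OF ext] this]
  show ?thesis
    using norm_integral_g_ext_diff_trunc_le[OF assms] by simp
next
  case False
  then show ?thesis
    using summable_ignore_initial_segment[OF assms] Q_nonneg
    by (simp add: not_integrable_integral_eq suminf_nonneg)
qed

end

lemma single_multi_index:
  "(\<lambda>_. 0)(j := k) \<in> multi_indices"
  "mi_order ((\<lambda>_. 0)(j := k)) = k"
  "mi_power b ((\<lambda>_. 0)(j := k)) = b j ^ k"
  by (cases "k = 0"; simp add: multi_indices_def mi_order_def mi_power_def)+

lemma coordinatewise_C2_on_cube_if_partial_derivatives:
  fixes g :: "(nat \<Rightarrow> real) \<Rightarrow> 'z::{banach, second_countable_topology}"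
  assumes continuous: "continuous_on cubeU g" and D: "partial_derivatives g D"
    and bound: "\<forall>y\<in>cubeU. \<forall>\<nu>\<in>multi_indices.
      norm (D \<nu> y) \<le> C0 * Gamma (real (mi_order \<nu>) + r1 + 1) * mi_power (\<lambda>j. r2 * rho j) \<nu>"
    and "summable rho"
  shows "coordinatewise_C2_on_cube g (\<lambda>j. D ((\<lambda>_. 0)(j := 1))) (\<lambda>j. D ((\<lambda>_. 0)(j := 2)))
    (\<lambda>j. C0 * Gamma (r1 + 2) * (r2 * rho j)) (\<lambda>j. C0 * Gamma (r1 + 3) * (r2 * rho j)\<^sup>2)"
proof
  have D0: "\<forall>y\<in>cubeU. D (\<lambda>_. 0) y = g y"
    and D': "\<And>\<nu> y j. \<nu> \<in> multi_indices \<Longrightarrow> y \<in> cubeU \<Longrightarrow>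
      ((\<lambda>t. D \<nu> (y(j := t))) has_vector_derivative D (\<nu>(j := Suc (\<nu> j))) y) (at (y j) within {-1/2..1/2})"
    using D by (auto simp: partial_derivatives_def)
  fix j y assume y: "y \<in> cubeU"
  have bound_single: "norm (D ((\<lambda>_. 0)(j := k)) y) \<le> C0 * Gamma (r1 + (real k + 1)) * (r2 * rho j) ^ k" for k
    using bspec[OF bspec[OF bound y] single_multi_index(1)[of j k]]
    by (simp add: single_multi_index(2,3) add_ac)
  show "((\<lambda>t. g (y(j := t))) has_vector_derivative D ((\<lambda>_. 0)(j := 1)) y) (at (y j) within {-1/2..1/2})"
  proof (rule has_vector_derivative_transform[OF cubeU_component[OF y]])
    show "g (y(j := t)) = D (\<lambda>_. 0) (y(j := t))" if "t \<in> {-1/2..1/2}" for t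
      using D0 fun_upd_in_cubeU[OF y that] by simp
    show "((\<lambda>t. D (\<lambda>_. 0) (y(j := t))) has_vector_derivative D ((\<lambda>_. 0)(j := 1)) y)
        (at (y j) within {-1/2..1/2})"
      using D'[OF single_multi_index(1)[of j 0] y, of j] by (simp add: fun_upd_idem)
  qed
  show "((\<lambda>t. D ((\<lambda>_. 0)(j := 1)) (y(j := t))) has_vector_derivative D ((\<lambda>_. 0)(j := 2)) y)
      (at (y j) within {-1/2..1/2})"
    using D'[OF single_multi_index(1)[of j 1] y, of j] by (simp add: numeral_2_eq_2)
  show "norm (D ((\<lambda>_. 0)(j := 1)) y) \<le> C0 * Gamma (r1 + 2) * (r2 * rho j)"
    using bound_single[of 1] by simp
  show "norm (D ((\<lambda>_. 0)(j := 2)) y) \<le> C0 * Gamma (r1 + 3) * (r2 * rho j)\<^sup>2"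
    using bound_single[of 2] by simp
qed (use continuous \<open>summable rho\<close> in \<open>auto intro: summable_mult\<close>)

lemma norm_integral_diff_trunc_le_of_derivative_bounds:
  fixes g :: "(nat \<Rightarrow> real) \<Rightarrow> 'z::{banach, second_countable_topology}"
  assumes "continuous_on cubeU g" "partial_derivatives g D"
    and "\<forall>y\<in>cubeU. \<forall>\<nu>\<in>multi_indices.
      norm (D \<nu> y) \<le> C0 * Gamma (real (mi_order \<nu>) + r1 + 1) * mi_power (\<lambda>j. r2 * rho j) \<nu>"
    and "summable rho" and summable_rho2: "summable (\<lambda>j. (rho j)\<^sup>2)"
  shows "norm (\<integral>y. g y - g (trunc s y) \<partial>cube_measure)
    \<le> C0 * Gamma (r1 + 3) * r2\<^sup>2 / 4 * (\<Sum>j. (rho (j + s))\<^sup>2)"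
proof -
  interpret coordinatewise_C2_on_cube g "\<lambda>j. D ((\<lambda>_. 0)(j := 1))" "\<lambda>j. D ((\<lambda>_. 0)(j := 2))"
    "\<lambda>j. C0 * Gamma (r1 + 2) * (r2 * rho j)" "\<lambda>j. C0 * Gamma (r1 + 3) * (r2 * rho j)\<^sup>2"
    by (rule coordinatewise_C2_on_cube_if_partial_derivatives[OF assms(1-4)])
  have "summable (\<lambda>j. C0 * Gamma (r1 + 3) * r2\<^sup>2 * (rho j)\<^sup>2)"
    using summable_rho2 by (rule summable_mult)
  then have "norm (\<integral>y. g y - g (trunc s y) \<partial>cube_measure)
      \<le> (\<Sum>j. C0 * Gamma (r1 + 3) * r2\<^sup>2 * (rho (j + s))\<^sup>2) / 4"
    using norm_integral_diff_trunc_le[of s] by (simp add: power_mult_distrib mult.assoc)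
  also have "\<dots> = C0 * Gamma (r1 + 3) * r2\<^sup>2 / 4 * (\<Sum>j. (rho (j + s))\<^sup>2)"
    using summable_ignore_initial_segment[OF summable_rho2, of s] by (simp add: suminf_mult)
  finally show ?thesis .
qed

theorem mainTheorem4:
  fixes p r1 r2 :: real and rho :: "nat \<Rightarrow> real"
  assumes "0 < p" "p < 1" "r1 \<ge> 0" "r2 > 0"
    and "summable (\<lambda>j. \<bar>rho j\<bar> powr p)"
    and "antimono rho"
  shows "\<exists>C>0. \<forall>(C0::real) (g :: (nat \<Rightarrow> real) \<Rightarrow> 'z::{banach, second_countable_topology})
            (D :: (nat \<Rightarrow> nat) \<Rightarrow> (nat \<Rightarrow> real) \<Rightarrow> 'z).
      C0 > 0 \<longrightarrow>
      continuous_on cubeU g \<longrightarrow>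
      partial_derivatives g D \<longrightarrow>
      (\<forall>y\<in>cubeU. \<forall>\<nu>\<in>multi_indices.
         norm (D \<nu> y) \<le> C0 * Gamma (real (mi_order \<nu>) + r1 + 1) * mi_power (\<lambda>j. r2 * rho j) \<nu>) \<longrightarrow>
      (\<forall>s::nat. s \<ge> 1 \<longrightarrow>
         norm (\<integral>y. (g y - g (trunc s y)) \<partial>cube_measure) \<le> C0 * C * real s powr (1 - 2 / p))"
proof -
  interpret rho: antitone_p_summable p rho
    using assms by unfold_locales auto
  have summable: "summable rho" "summable (\<lambda>j. (rho j)\<^sup>2)"
    using rho.summable_powr_gt[of 1] rho.summable_powr_gt[of 2] assms(2) rho.nonneg by (simp_all add: powr_one)
  define K where "K = Gamma (r1 + 3) * r2\<^sup>2 * (rho.powr_sum powr (2 / p) / (2 / p - 1)) / 4"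
  have "Gamma (r1 + 3) > 0"
    using assms(3) by (intro Gamma_real_pos) simp
  then have "K \<ge> 0"
    using assms(1,2) rho.powr_sum_nonneg by (simp add: K_def field_simps)
  show ?thesis
  proof (intro exI[of _ "K + 1"] conjI allI impI)
    fix C0 :: real and g :: "(nat \<Rightarrow> real) \<Rightarrow> 'z" and D and s :: nat
    assume C0: "C0 > 0" and "continuous_on cubeU g" "partial_derivatives g D"
      and "\<forall>y\<in>cubeU. \<forall>\<nu>\<in>multi_indices.
        norm (D \<nu> y) \<le> C0 * Gamma (real (mi_order \<nu>) + r1 + 1) * mi_power (\<lambda>j. r2 * rho j) \<nu>"
      and s: "s \<ge> 1"
    then have "norm (\<integral>y. g y - g (trunc s y) \<partial>cube_measure)
        \<le> C0 * Gamma (r1 + 3) * r2\<^sup>2 / 4 * (\<Sum>j. (rho (j + s))\<^sup>2)"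
      using summable by (intro norm_integral_diff_trunc_le_of_derivative_bounds)
    also have "\<dots> \<le> C0 * Gamma (r1 + 3) * r2\<^sup>2 / 4
        * (rho.powr_sum powr (2 / p) * real s powr (1 - 2 / p) / (2 / p - 1))"
      using rho.suminf_tail_powr_le[of 2 s] assms(2) C0 s rho.nonneg \<open>Gamma (r1 + 3) > 0\<close>
      by (intro mult_left_mono) auto
    also have "\<dots> = C0 * K * real s powr (1 - 2 / p)"
      by (simp add: K_def)
    also have "\<dots> \<le> C0 * (K + 1) * real s powr (1 - 2 / p)"
      using C0 by (intro mult_right_mono) auto
    finally show "norm (\<integral>y. g y - g (trunc s y) \<partial>cube_measure) \<le> C0 * (K + 1) * real s powr (1 - 2 / p)" .
  qed (use \<open>K \<ge> 0\<close> in simp)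
qed

end
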